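(* There exist constants $\beta\in(0,1)$, $C>0$ and $c>0$ such that for every $m>0$, every odd $n\ge5$, every $\epsilon\in(0,1)$ with $n\epsilon\ge C$, and every $\epsilon$-differentially private mechanism $\mathcal{M}:V^n\to V$, there is some $D\in\mathcal{CTM}$ with $$\mathrm{FAIR}(D,\mathcal{M}(D))\ge c\,\frac{m}{n\epsilon}\ln\frac1\beta$$ with probability at least $\beta$.
   Context: $V=[-m/2,m/2]$. A dataset is $D=(x_1,\dots,x_n)\in V^n$ (a multiset), indexed so that $x_1\le\dots\le x_n$, with median (optimal location) $\mathcal{T}(D)=x_{\lceil n/2\rceil}$. $\mathrm{FAIR}(D,\ell)=\max_{1\le i\le n}\left(|x_i-\ell|-|x_i-\mathcal{T}(D)|\right)$. $\mathcal{CTM}$ is the set of datasets with $|x_{i+1}-x_i|\ge|x_{j+1}-x_j|$ for all $1\le i<j\le\lceil n/2\rceil-1$ and $|x_i-x_{i-1}|\ge|x_j-x_{j-1}|$ for all $\lceil n/2\rceil+1\le j<i\le n$. Two datasets are neighboring if, as multisets, they differ in exactly one element; $\mathcal{M}$ is $\epsilon$-differentially private if $\Pr[\mathcal{M}(D)\in S]\le e^{\epsilon}\Pr[\mathcal{M}(D')\in S]$ for all neighboring $D,D'$ and measurable $S\subseteq V$. *)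

theory Defs
  imports "HOL-Probability.Probability" "HOL-Library.Multiset"
begin

definition Vdom :: "real \<Rightarrow> real set" where
  "Vdom m = {-m/2 .. m/2}"

definition datasets :: "real \<Rightarrow> nat \<Rightarrow> real multiset set" where
  "datasets m n = {D. size D = n \<and> set_mset D \<subseteq> Vdom m}"

definition xel :: "real multiset \<Rightarrow> nat \<Rightarrow> real" where
  "xel D i = sorted_list_of_multiset D ! (i - 1)"

text \<open>Median index ceil(n/2) and the median T(D).\<close>
definition midx :: "nat \<Rightarrow> nat" where
  "midx n = (n + 1) div 2"

definition Tmed :: "real multiset \<Rightarrow> real" where
  "Tmed D = xel D (midx (size D))"

definition FAIR :: "real multiset \<Rightarrow> real \<Rightarrow> real" where
  "FAIR D l = Max ((\<lambda>i. \<bar>xel D i - l\<bar> - \<bar>xel D i - Tmed D\<bar>) ` {1..size D})"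

definition CTM :: "real multiset set" where
  "CTM = {D. (\<forall>i j. 1 \<le> i \<and> i < j \<and> j \<le> midx (size D) - 1 \<longrightarrow>
                 \<bar>xel D (i+1) - xel D i\<bar> \<ge> \<bar>xel D (j+1) - xel D j\<bar>)
           \<and> (\<forall>i j. midx (size D) + 1 \<le> j \<and> j < i \<and> i \<le> size D \<longrightarrow>
                 \<bar>xel D i - xel D (i-1)\<bar> \<ge> \<bar>xel D j - xel D (j-1)\<bar>)}"

definition neighboring :: "real multiset \<Rightarrow> real multiset \<Rightarrow> bool" where
  "neighboring D D' \<longleftrightarrow> size D = size D' \<and> size (D - D') = 1"

definition mechanism :: "real \<Rightarrow> nat \<Rightarrow> (real multiset \<Rightarrow> real measure) \<Rightarrow> bool" where
  "mechanism m n M \<longleftrightarrow> (\<forall>D \<in> datasets m n.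
     prob_space (M D) \<and> sets (M D) = sets borel \<and> measure (M D) (Vdom m) = 1)"

definition differentially_private ::
  "real \<Rightarrow> nat \<Rightarrow> real \<Rightarrow> (real multiset \<Rightarrow> real measure) \<Rightarrow> bool" where
  "differentially_private m n \<epsilon> M \<longleftrightarrow> mechanism m n M \<and>
     (\<forall>D \<in> datasets m n. \<forall>D' \<in> datasets m n. neighboring D D' \<longrightarrow>
        (\<forall>S \<in> sets borel. S \<subseteq> Vdom m \<longrightarrow>
           measure (M D) S \<le> exp \<epsilon> * measure (M D') S))"

end

theory Submission
  imports Defs
begin

(* For a nonempty dataset the fairness loss FAIR(D, l) is just the distance of l to the median
   (the triangle inequality bounds each term, and the median index attains the bound).
   Take the evenly spaced datasets D_j = {-m/2 + i h | j <= i < j + n} with h = m/(2n):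
   consecutive ones are neighbours, all lie in CTM, and the median of D_k exceeds that of
   D_0 by k h.  With k about 1/(2 epsilon) this shift is at least m/(4 n epsilon), while
   group privacy over the chain D_0, ..., D_k changes probabilities by a factor
   exp(k epsilon) <= e < 3 only.  So the mechanism cannot put mass 3/4 near the median
   of both D_0 and D_k, and one of them sees a loss of order m/(n epsilon) with
   probability at least 1/4. *)

lemma FAIR_eq_dist_median:
  assumes "size D \<ge> 1"
  shows "FAIR D l = \<bar>l - Tmed D\<bar>"
  unfolding FAIR_def
proof (rule Max_eqI)
  have "midx (size D) \<in> {1..size D}"
    using assms unfolding midx_def by auto
  then show "\<bar>l - Tmed D\<bar> \<in> (\<lambda>i. \<bar>xel D i - l\<bar> - \<bar>xel D i - Tmed D\<bar>) ` {1..size D}"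
    by (force simp: Tmed_def)
qed auto

lemma differentially_private_chain:
  assumes dp: "differentially_private m n \<epsilon> M"
    and datasets: "\<And>j. j \<le> k \<Longrightarrow> D j \<in> datasets m n"
    and neighbours: "\<And>j. j < k \<Longrightarrow> neighboring (D j) (D (Suc j))"
    and S: "S \<in> sets borel" "S \<subseteq> Vdom m"
  shows "measure (M (D 0)) S \<le> exp (real k * \<epsilon>) * measure (M (D k)) S"
  using datasets neighbours
proof (induction k)
  case (Suc k)
  have step: "measure (M (D k)) S \<le> exp \<epsilon> * measure (M (D (Suc k))) S"
    using dp Suc.prems S unfolding differentially_private_def by simp
  have "measure (M (D 0)) S \<le> exp (real k * \<epsilon>) * measure (M (D k)) S"
    using Suc by simp
  also have "\<dots> \<le> exp (real k * \<epsilon>) * (exp \<epsilon> * measure (M (D (Suc k))) S)"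
    using step by (intro mult_left_mono) auto
  also have "\<dots> = exp (real (Suc k) * \<epsilon>) * measure (M (D (Suc k))) S"
    by (simp add: distrib_right exp_add)
  finally show ?case .
qed simp

lemma far_from_one_of_two_points:
  fixes P Q :: "real measure"
  assumes P: "prob_space P" "sets P = sets borel" "measure P V = 1"
    and Q: "prob_space Q" "sets Q = sets borel"
    and V: "V \<in> sets borel"
    and dominated: "\<And>S. S \<in> sets borel \<Longrightarrow> S \<subseteq> V \<Longrightarrow> measure P S \<le> \<gamma> * measure Q S"
    and "\<gamma> \<ge> 0" and separated: "2 * t \<le> \<bar>T' - T\<bar>"
  shows "1 \<le> measure P {l. t \<le> \<bar>l - T\<bar>} + \<gamma> * measure Q {l. t \<le> \<bar>l - T'\<bar>}"
proof -
  interpret P: prob_space P by fact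
  interpret Q: prob_space Q by fact
  have far_borel: "{l. t \<le> \<bar>l - c\<bar>} \<in> sets borel" for c :: real
    by (intro borel_closed closed_Collect_le continuous_intros)
  define S where "S = ball T t \<inter> V"
  have S_borel: "S \<in> sets borel"
    unfolding S_def using V by auto
  have "V \<subseteq> S \<union> {l. t \<le> \<bar>l - T\<bar>}"
    unfolding S_def by (auto simp: dist_real_def)
  then have "1 \<le> P.prob (S \<union> {l. t \<le> \<bar>l - T\<bar>})"
    using P S_borel far_borel by (metis P.finite_measure_mono sets.Un)
  also have "\<dots> \<le> P.prob S + P.prob {l. t \<le> \<bar>l - T\<bar>}"
    using P S_borel far_borel by (intro measure_Un_le) auto
  finally have "1 \<le> P.prob S + P.prob {l. t \<le> \<bar>l - T\<bar>}" .
  moreover have "P.prob S \<le> \<gamma> * Q.prob S"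
    using dominated S_borel unfolding S_def by simp
  moreover have "Q.prob S \<le> Q.prob {l. t \<le> \<bar>l - T'\<bar>}"
    using Q far_borel separated by (intro Q.finite_measure_mono) (auto simp: S_def dist_real_def)
  then have "\<gamma> * Q.prob S \<le> \<gamma> * Q.prob {l. t \<le> \<bar>l - T'\<bar>}"
    using \<open>\<gamma> \<ge> 0\<close> by (rule mult_left_mono)
  ultimately show ?thesis
    by linarith
qed

definition arith_dataset :: "real \<Rightarrow> real \<Rightarrow> nat \<Rightarrow> nat \<Rightarrow> real multiset" where
  "arith_dataset a h n j = mset (map (\<lambda>i. a + real i * h) [j..<j+n])"

lemma size_arith_dataset [simp]: "size (arith_dataset a h n j) = n"
  by (simp add: arith_dataset_def)

lemma xel_arith_dataset:
  assumes "h \<ge> 0" "1 \<le> i" "i \<le> n"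
  shows "xel (arith_dataset a h n j) i = a + (real j + real i - 1) * h"
proof -
  have "sorted (map (\<lambda>i. a + real i * h) [j..<j+n])"
    unfolding sorted_map using assms
    by (auto intro!: sorted_wrt_mono_rel[OF _ sorted_upt] mult_right_mono)
  then have "sorted_list_of_multiset (arith_dataset a h n j) = map (\<lambda>i. a + real i * h) [j..<j+n]"
    by (simp only: arith_dataset_def sorted_list_of_multiset_mset sorted_sort_id)
  moreover have "[j..<j+n] ! (i - 1) = j + (i - 1)"
    using assms by simp
  ultimately show ?thesis
    using assms by (simp add: xel_def of_nat_diff)
qed

lemma Tmed_arith_dataset:
  assumes "h \<ge> 0" "1 \<le> n"
  shows "Tmed (arith_dataset a h n j) = a + (real j + real (midx n) - 1) * h"
  using assms by (simp add: Tmed_def xel_arith_dataset midx_def)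

lemma arith_dataset_in_CTM:
  assumes "h \<ge> 0"
  shows "arith_dataset a h n j \<in> CTM"
proof -
  let ?x = "xel (arith_dataset a h n j)"
  have gap: "?x (i + 1) - ?x i = h" if "1 \<le> i" "i + 1 \<le> n" for i
    using that assms by (simp add: xel_arith_dataset algebra_simps)
  have "midx n \<le> n"
    unfolding midx_def by simp
  show ?thesis
    unfolding CTM_def
  proof (intro CollectI conjI allI impI)
    fix i i' assume "1 \<le> i \<and> i < i' \<and> i' \<le> midx (size (arith_dataset a h n j)) - 1"
    with \<open>midx n \<le> n\<close> have "1 \<le> i" "i + 1 \<le> n" "1 \<le> i'" "i' + 1 \<le> n"
      by auto
    then have "?x (i + 1) - ?x i = h" "?x (i' + 1) - ?x i' = h"
      by (simp_all only: gap)
    then show "\<bar>?x (i + 1) - ?x i\<bar> \<ge> \<bar>?x (i' + 1) - ?x i'\<bar>"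
      by simp
  next
    fix i i' assume "midx (size (arith_dataset a h n j)) + 1 \<le> i' \<and> i' < i \<and> i \<le> size (arith_dataset a h n j)"
    then have "2 \<le> i'" "i' < i" "i \<le> n"
      unfolding midx_def by auto
    then have "?x i - ?x (i - 1) = h" "?x i' - ?x (i' - 1) = h"
      using gap[of "i - 1"] gap[of "i' - 1"] by simp_all
    then show "\<bar>?x i - ?x (i - 1)\<bar> \<ge> \<bar>?x i' - ?x (i' - 1)\<bar>"
      by simp
  qed
qed

lemma neighboring_arith_dataset_Suc:
  assumes "h > 0" "1 \<le> n"
  shows "neighboring (arith_dataset a h n j) (arith_dataset a h n (Suc j))"
proof -
  define common where "common = mset (map (\<lambda>i. a + real i * h) [Suc j..<j+n])"
  have "arith_dataset a h n j = add_mset (a + real j * h) common"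
    using assms(2) unfolding arith_dataset_def common_def by (simp add: upt_rec)
  moreover have "arith_dataset a h n (Suc j) = add_mset (a + real (j + n) * h) common"
    using assms(2) unfolding arith_dataset_def common_def by (cases n) (auto simp: add_mset_commute)
  moreover have "a + real j * h \<noteq> a + real (j + n) * h"
    using assms by simp
  ultimately show ?thesis
    unfolding neighboring_def by (simp add: diff_union_single_conv)
qed

lemma arith_dataset_in_datasets:
  assumes "m > 0" "j \<le> n"
  shows "arith_dataset (-m/2) (m / (2 * n)) n j \<in> datasets m n"
proof -
  have "-m/2 + real i * (m / (2 * n)) \<in> Vdom m" if "i < j + n" for i
  proof -
    have "real i * (m / (2 * n)) \<le> 2 * real n * (m / (2 * n))"
      using that assms by (intro mult_right_mono) auto
    also have "\<dots> = m"
      using that assms by simp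
    finally have "real i * (m / (2 * n)) \<le> m" .
    moreover have "0 \<le> real i * (m / (2 * n))"
      using assms by simp
    ultimately show ?thesis
      unfolding Vdom_def atLeastAtMost_iff by linarith
  qed
  then show ?thesis
    unfolding datasets_def arith_dataset_def by auto
qed

lemma nat_between_half_inverse_and_inverse:
  fixes \<epsilon> :: real
  assumes "0 < \<epsilon>" "\<epsilon> \<le> 1"
  obtains k :: nat where "1 \<le> 2 * real k * \<epsilon>" "real k * \<epsilon> \<le> 1"
proof -
  define k where "k = nat \<lfloor>1 / \<epsilon>\<rfloor>"
  have "1 \<le> \<lfloor>1 / \<epsilon>\<rfloor>"
    using assms by simp
  then have k: "real k = of_int \<lfloor>1 / \<epsilon>\<rfloor>"
    unfolding k_def by (intro of_nat_nat) linarith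
  then have "1 \<le> real k" "real k \<le> 1 / \<epsilon>" "1 / \<epsilon> \<le> 2 * real k"
    using \<open>1 \<le> \<lfloor>1 / \<epsilon>\<rfloor>\<close> floor_correct[of "1 / \<epsilon>"] by linarith+
  then show thesis
    using assms by (intro that[of k]) (simp_all add: field_simps)
qed

lemma mechanism_far_from_median_for_one_of_two:
  assumes mech: "mechanism m n M" and "n \<ge> 1"
    and D: "D \<in> datasets m n" "D' \<in> datasets m n"
    and dominated: "\<And>S. S \<in> sets borel \<Longrightarrow> S \<subseteq> Vdom m \<Longrightarrow> measure (M D) S \<le> \<gamma> * measure (M D') S"
    and \<gamma>: "0 \<le> \<gamma>" "\<gamma> \<le> 3" and separated: "2 * t \<le> \<bar>Tmed D' - Tmed D\<bar>"
  shows "1/4 \<le> measure (M D) {l \<in> space (M D). t \<le> FAIR D l}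
    \<or> 1/4 \<le> measure (M D') {l \<in> space (M D'). t \<le> FAIR D' l}"
proof -
  have far_eq: "{l \<in> space (M E). t \<le> FAIR E l} = {l. t \<le> \<bar>l - Tmed E\<bar>}"
    if "E \<in> datasets m n" for E
  proof -
    have "sets (M E) = sets borel"
      using mech that unfolding mechanism_def by blast
    then have "space (M E) = UNIV"
      using sets_eq_imp_space_eq by fastforce
    moreover have "size E \<ge> 1"
      using that \<open>n \<ge> 1\<close> unfolding datasets_def by simp
    ultimately show ?thesis
      by (simp add: FAIR_eq_dist_median)
  qed
  have "1 \<le> measure (M D) {l. t \<le> \<bar>l - Tmed D\<bar>} + \<gamma> * measure (M D') {l. t \<le> \<bar>l - Tmed D'\<bar>}"
    using mech D dominated \<gamma> separated unfolding mechanism_def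
    by (intro far_from_one_of_two_points[where V = "Vdom m"]) (auto simp: Vdom_def)
  moreover have "\<gamma> * measure (M D') {l. t \<le> \<bar>l - Tmed D'\<bar>} \<le> 3 * measure (M D') {l. t \<le> \<bar>l - Tmed D'\<bar>}"
    using \<gamma> by (intro mult_right_mono) simp_all
  ultimately show ?thesis
    unfolding far_eq[OF D(1)] far_eq[OF D(2)] by linarith
qed

lemma differentially_private_far_from_median:
  assumes m: "m > 0" and \<epsilon>: "0 < \<epsilon>" "\<epsilon> \<le> 1" and large: "1 \<le> real n * \<epsilon>"
    and dp: "differentially_private m n \<epsilon> M"
    and t: "t \<le> m / (8 * real n * \<epsilon>)"
  shows "\<exists>D \<in> datasets m n \<inter> CTM. 1/4 \<le> measure (M D) {l \<in> space (M D). t \<le> FAIR D l}"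
proof -
  obtain k :: nat where k: "1 \<le> 2 * real k * \<epsilon>" "real k * \<epsilon> \<le> 1"
    using nat_between_half_inverse_and_inverse \<epsilon> by blast
  have "real k * \<epsilon> \<le> real n * \<epsilon>"
    using k(2) large by linarith
  then have "k \<le> n"
    using \<epsilon> by simp
  have n: "n \<ge> 1"
    using large by (cases n) auto
  define h where "h = m / (2 * n)"
  define D where "D j = arith_dataset (-m/2) h n j" for j
  have h: "h > 0"
    unfolding h_def using m n by simp
  have D_datasets: "D j \<in> datasets m n" if "j \<le> k" for j
    unfolding D_def h_def using arith_dataset_in_datasets m that \<open>k \<le> n\<close> by simp
  have D_CTM: "D j \<in> CTM" for j
    unfolding D_def using arith_dataset_in_CTM h by simp
  have "2 * t \<le> m / (4 * real n * \<epsilon>)"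
    using t by simp
  also have "\<dots> \<le> real k * h"
    using k m \<epsilon> n unfolding h_def by (simp add: field_simps)
  also have "\<dots> = \<bar>Tmed (D k) - Tmed (D 0)\<bar>"
    using h n by (simp add: D_def Tmed_arith_dataset algebra_simps)
  finally have separated: "2 * t \<le> \<bar>Tmed (D k) - Tmed (D 0)\<bar>" .
  have dominated: "measure (M (D 0)) S \<le> exp (real k * \<epsilon>) * measure (M (D k)) S"
    if "S \<in> sets borel" "S \<subseteq> Vdom m" for S
    using differentially_private_chain[where D = D and k = k, OF dp D_datasets _ that] h n
    by (simp add: D_def neighboring_arith_dataset_Suc)
  have "exp (real k * \<epsilon>) \<le> 3"
    using k(2) exp_le by (meson exp_le_cancel_iff order_trans)
  then have "1/4 \<le> measure (M (D 0)) {l \<in> space (M (D 0)). t \<le> FAIR (D 0) l}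
      \<or> 1/4 \<le> measure (M (D k)) {l \<in> space (M (D k)). t \<le> FAIR (D k) l}"
    using dp n D_datasets dominated separated unfolding differentially_private_def
    by (intro mechanism_far_from_median_for_one_of_two) auto
  then show ?thesis
    using D_datasets D_CTM by (meson IntI le0 order_refl)
qed

theorem theorem7p21:
  shows "\<exists>\<beta>::real. \<exists>C::real. \<exists>c::real. 0 < \<beta> \<and> \<beta> < 1 \<and> C > 0 \<and> c > 0 \<and>
    (\<forall>(m::real) (n::nat) (\<epsilon>::real) M.
       m > 0 \<longrightarrow> odd n \<longrightarrow> n \<ge> 5 \<longrightarrow> 0 < \<epsilon> \<longrightarrow> \<epsilon> < 1 \<longrightarrow> real n * \<epsilon> \<ge> C \<longrightarrow>
       differentially_private m n \<epsilon> M \<longrightarrow>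
       (\<exists>D \<in> datasets m n \<inter> CTM.
          measure (M D) {l \<in> space (M D).
             FAIR D l \<ge> c * (m / (real n * \<epsilon>)) * ln (1 / \<beta>)} \<ge> \<beta>))"
proof (rule exI[of _ "1/4"], rule exI[of _ 1], rule exI[of _ "1/16"], intro conjI allI impI)
  fix m \<epsilon> :: real and n :: nat and M
  assume "m > 0" "odd n" "n \<ge> 5" "0 < \<epsilon>" "\<epsilon> < 1" "1 \<le> real n * \<epsilon>"
    and "differentially_private m n \<epsilon> M"
  moreover have "ln (1 / (1/4 :: real)) \<le> 2"
    using ln_mult[of 2 2] ln_2_less_1 by simp
  then have "1/16 * (m / (real n * \<epsilon>)) * ln (1 / (1/4)) \<le> m / (8 * real n * \<epsilon>)"
    using \<open>m > 0\<close> \<open>0 < \<epsilon>\<close> \<open>n \<ge> 5\<close> by (simp add: field_simps)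
  ultimately show "\<exists>D \<in> datasets m n \<inter> CTM. measure (M D) {l \<in> space (M D).
      FAIR D l \<ge> 1/16 * (m / (real n * \<epsilon>)) * ln (1 / (1/4))} \<ge> 1/4"
    by (intro differentially_private_far_from_median) auto
qed auto

end
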